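(* Let $f:\mathbb{R}^n\to\mathbb{R}$ be convex and continuously differentiable with locally Lipschitz gradient, with $\mathcal{X}^*:=\arg\min f\neq\emptyset$ and optimal value $f^*$. Fix $x^0$, $\alpha_0>0$, $\theta_0>0$, $\tau\ge1$, $0<\omega\le\frac1{\sqrt2}$, $\gamma_k\in[\gamma_{\min},\gamma_{\max}]\subset(0,\infty)$, and generate $x^{k+1}=x^k-\alpha_k\gamma_k\nabla f(x^k)$ with, for $k\ge1$, $L_k:=\frac{\|\nabla f(x^k)-\nabla f(x^{k-1})\|}{\|x^k-x^{k-1}\|}$, $\alpha_k:=\min\{\frac{\alpha_{k-1}\gamma_{k-1}}{\gamma_k}\sqrt{2(1-\omega^2)+\theta_{k-1}/\tau},\frac{\omega}{\gamma_kL_k}\}$, $\theta_k:=\frac{\alpha_k\gamma_k}{\alpha_{k-1}\gamma_{k-1}}$. Let $\eta:=\mathrm{dist}^2(x^0;\mathcal{X}^* )+2\alpha_0^2\gamma_0^2\|\nabla f(x^0)\|^2+2\alpha_0\gamma_0\theta_0(f(x^0)-f^* )$, let $W:=\overline B(0;R)$ with $R>\sqrt\eta+\mathrm{dist}(x^0;\mathcal{X}^* )+\|x^0\|$, and let $L_W>0$ satisfy $\|\nabla f(x)-\nabla f(y)\|\le L_W\|x-y\|$ on $W$. Then: (a) $\min_{1\le k\le N}\|\nabla f(x^k)\|\le\sqrt{\frac{L_W^2\eta}{N\min\{L_W\alpha_0\gamma_0,\omega\}}}$ for all $N\in\mathbb{N}$, and for every $\varepsilon>0$ the first index $N_{\nabla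 f}(\varepsilon)$ with $\|\nabla f(x^k)\|\le\varepsilon$ satisfies $N_{\nabla f}(\varepsilon)\le\Big\lceil1+\frac{L_W^2\eta}{\varepsilon^2\min\{L_W\alpha_0\gamma_0,\omega\}}\Big\rceil$; (b) with $f_N^*:=\min\{f(x^k):0\le k\le N\}$, one has $f_N^*-f^*\le\frac{L_W((R+\|x^0\|)^2+\eta)}{2N\min\{L_W\alpha_0\gamma_0,\omega\}}$ for all $N\in\mathbb{N}$, and for every $\varepsilon>0$ the first index $N_f(\varepsilon)$ with $f(x^k)-f^*\le\varepsilon$ satisfies $N_f(\varepsilon)\le\Big\lceil1+\frac{L_W((R+\|x^0\|)^2+\eta)}{2\varepsilon\min\{L_W\alpha_0\gamma_0,\omega\}}\Big\rceil$.
   Context: This is the adaptive scaled gradient algorithm (AdaSGA). $\overline B(0;R)$ is the closed ball; $\mathrm{dist}(x;S)=\inf_{z\in S}\|z-x\|$. *)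

theory Defs
  imports "HOL-Analysis.Analysis"
begin

definition locally_lipschitz :: "('a::metric_space \<Rightarrow> 'b::metric_space) \<Rightarrow> bool" where
  "locally_lipschitz g \<longleftrightarrow>
     (\<forall>x. \<exists>r>0. \<exists>L. \<forall>y\<in>ball x r. \<forall>z\<in>ball x r. dist (g y) (g z) \<le> L * dist y z)"

text \<open>Local Lipschitz estimate used by AdaSGA at step k+1 (k+1 \<ge> 1).\<close>
definition adasga_L :: "('a::real_normed_vector \<Rightarrow> 'a) \<Rightarrow> (nat \<Rightarrow> 'a) \<Rightarrow> nat \<Rightarrow> real" where
  "adasga_L g x k = norm (g (x (Suc k)) - g (x k)) / norm (x (Suc k) - x k)"

text \<open>Step size rule; a vanishing estimate L_k = 0 means omega/(gamma_k L_k) = +infinity.\<close>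
definition adasga_alpha_next :: "real \<Rightarrow> real \<Rightarrow> real \<Rightarrow> real \<Rightarrow> real \<Rightarrow> real \<Rightarrow> real \<Rightarrow> real" where
  "adasga_alpha_next \<omega> \<tau> a_prev g_prev th_prev g_new Lk =
     (let A = a_prev * g_prev / g_new * sqrt (2 * (1 - \<omega>\<^sup>2) + th_prev / \<tau>)
      in if Lk = 0 then A else min A (\<omega> / (g_new * Lk)))"

end

theory Submission
  imports Defs
begin

text \<open>Write \<open>l k = \<alpha> k * \<gamma> k\<close> for the effective step; in these terms the scaled method is the
  unscaled adaptive gradient method. With \<open>\<rho> = 1 / (2 (1 - \<omega>\<^sup>2))\<close> the Lyapunov function
  \<open>E n = \<parallel>x (n+1) - x*\<parallel>\<^sup>2 + (2\<rho> - 1) (l n)\<^sup>2 \<parallel>\<nabla>f (x n)\<parallel>\<^sup>2 + 2 l n (1 + \<rho> \<theta> n) (f (x n) - f*)\<close>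
  starts below \<open>\<eta>\<close> and drops at step \<open>n\<close> by \<open>2 w n (f (x n) - f*)\<close>, where the weights
  \<open>w n \<ge> 0\<close> telescope to the sum of the steps. So the iterates never leave \<open>W\<close>; there the
  local curvature estimates are at most \<open>L\<^sub>W\<close>, which keeps every step above
  \<open>min (L\<^sub>W l 0) \<omega> / L\<^sub>W\<close>. For the gradient
  one splits the first \<open>N\<close> iterations at the last step with \<open>l k \<ge> 1 / L\<^sub>W\<close>: before it the gap
  controls \<open>\<parallel>\<nabla>f\<parallel>\<^sup>2\<close> and the Lyapunov estimate applies, after it every step yields
  sufficient decrease.\<close>

section \<open>Smooth convex functions\<close>

lemma has_real_derivative_along_line:
  fixes f :: "'a::real_inner \<Rightarrow> real"
  assumes grad: "\<And>y. (f has_derivative (\<lambda>h. g y \<bullet> h)) (at y)"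
  shows "((\<lambda>t. f (p + t *\<^sub>R d)) has_real_derivative (g (p + t *\<^sub>R d) \<bullet> d)) (at t)"
proof -
  have "((\<lambda>t. p + t *\<^sub>R d) has_derivative (\<lambda>s. s *\<^sub>R d)) (at t)"
    by (auto intro!: derivative_eq_intros)
  from diff_chain_at[OF this grad]
  show ?thesis
    by (simp add: o_def has_field_derivative_def inner_scaleR_right mult_commute_abs)
qed

lemma convex_on_gradient_inequality:
  fixes f :: "'a::real_inner \<Rightarrow> real"
  assumes cvx: "convex_on UNIV f"
    and grad: "\<And>y. (f has_derivative (\<lambda>h. g y \<bullet> h)) (at y)"
  shows "f x + g x \<bullet> (y - x) \<le> f y"
proof -
  let ?\<phi> = "\<lambda>t. f (x + t *\<^sub>R (y - x))"
  have "convex_on UNIV ?\<phi>"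
  proof (rule convex_onI)
    fix t s u :: real
    assume "0 < t" "t < 1"
    have "x + ((1 - t) * s + t * u) *\<^sub>R (y - x)
        = (1 - t) *\<^sub>R (x + s *\<^sub>R (y - x)) + t *\<^sub>R (x + u *\<^sub>R (y - x))"
      by (simp add: algebra_simps)
    then show "?\<phi> ((1 - t) *\<^sub>R s + t *\<^sub>R u) \<le> (1 - t) * ?\<phi> s + t * ?\<phi> u"
      using convex_onD[OF cvx, of t "x + s *\<^sub>R (y - x)" "x + u *\<^sub>R (y - x)"] \<open>0 < t\<close> \<open>t < 1\<close>
      by simp
  qed simp
  moreover have "(?\<phi> has_real_derivative (g x \<bullet> (y - x))) (at 0 within UNIV)"
    using has_real_derivative_along_line[OF grad, of x "y - x" 0] by simp
  ultimately have "?\<phi> 1 - ?\<phi> 0 \<ge> (g x \<bullet> (y - x)) * (1 - 0)"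
    by (intro convex_on_imp_above_tangent) auto
  then show ?thesis by simp
qed

lemma gradient_eq_0_at_minimizer:
  assumes grad: "\<And>y. (f has_derivative (\<lambda>h. g y \<bullet> h)) (at y)"
    and min: "\<And>y. f z \<le> f y"
  shows "g z = 0"
proof -
  have "(\<lambda>h. g z \<bullet> h) = (\<lambda>h. 0)"
    by (rule has_derivative_local_min[OF grad]) (simp add: min)
  then have "g z \<bullet> g z = 0" by metis
  then show ?thesis by simp
qed

lemma closed_minimizers:
  assumes "continuous_on UNIV f"
  shows "closed {z. \<forall>y. f z \<le> (f y :: real)}"
proof -
  have "{z. \<forall>y. f z \<le> f y} = (\<Inter>y. {z. f z \<le> f y})" by auto
  then show ?thesis
    by (simp add: closed_INT closed_Collect_le assms continuous_on_const)
qed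

lemma nearest_minimizer:
  fixes f :: "'a::heine_borel \<Rightarrow> real"
  assumes "continuous_on UNIV f" "{z. \<forall>y. f z \<le> f y} \<noteq> {}"
  obtains z where "\<And>y. f z \<le> f y" "infdist p {z. \<forall>y. f z \<le> f y} = dist p z"
  using infdist_attains_inf[OF closed_minimizers[OF assms(1)] assms(2)] by auto

lemma descent_lemma:
  fixes f :: "'a::real_inner \<Rightarrow> real"
  assumes grad: "\<And>y. (f has_derivative (\<lambda>h. g y \<bullet> h)) (at y)"
    and S: "convex S" and lip: "L-lipschitz_on S g"
    and y: "y \<in> S" and z: "z \<in> S"
  shows "f z \<le> f y + g y \<bullet> (z - y) + L / 2 * (norm (z - y))\<^sup>2"
proof -
  define d where "d = z - y"
  define \<psi> where "\<psi> t = f (y + t *\<^sub>R d) - t * (g y \<bullet> d) - L / 2 * t\<^sup>2 * (norm d)\<^sup>2" for t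
  have "\<psi> 1 \<le> \<psi> 0"
  proof (rule DERIV_nonpos_imp_nonincreasing[of 0 1])
    fix t :: real
    assume t: "0 \<le> t" "t \<le> 1"
    have "y + t *\<^sub>R d = (1 - t) *\<^sub>R y + t *\<^sub>R z" by (simp add: d_def algebra_simps)
    then have mem: "y + t *\<^sub>R d \<in> S"
      using S y z t by (simp add: convex_def)
    have D: "(\<psi> has_real_derivative
               (g (y + t *\<^sub>R d) \<bullet> d - g y \<bullet> d - L / 2 * (2 * t) * (norm d)\<^sup>2)) (at t)"
      unfolding \<psi>_def by (auto intro!: derivative_eq_intros has_real_derivative_along_line[OF grad])
    have "g (y + t *\<^sub>R d) \<bullet> d - g y \<bullet> d = (g (y + t *\<^sub>R d) - g y) \<bullet> d"
      by (simp add: inner_diff_left)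
    also have "\<dots> \<le> norm (g (y + t *\<^sub>R d) - g y) * norm d" by (rule norm_cauchy_schwarz)
    also have "\<dots> \<le> L * norm (t *\<^sub>R d) * norm d"
      using lipschitz_on_normD[OF lip mem y] by (intro mult_right_mono) auto
    also have "\<dots> = L * t * (norm d)\<^sup>2" using t by (simp add: power2_eq_square)
    finally have "g (y + t *\<^sub>R d) \<bullet> d - g y \<bullet> d - L / 2 * (2 * t) * (norm d)\<^sup>2 \<le> 0" by simp
    with D show "\<exists>D. (\<psi> has_real_derivative D) (at t) \<and> D \<le> 0" by blast
  qed simp
  then show ?thesis unfolding \<psi>_def d_def by simp
qed

lemma gradient_step_decrease:
  fixes f :: "'a::real_inner \<Rightarrow> real"
  assumes grad: "\<And>y. (f has_derivative (\<lambda>h. g y \<bullet> h)) (at y)"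
    and "convex S" "L-lipschitz_on S g"
    and "y \<in> S" "y - t *\<^sub>R g y \<in> S"
  shows "f (y - t *\<^sub>R g y) \<le> f y - t * (1 - L * t / 2) * (norm (g y))\<^sup>2"
proof -
  have "f (y - t *\<^sub>R g y) \<le> f y + g y \<bullet> (- t *\<^sub>R g y) + L / 2 * (norm (- t *\<^sub>R g y))\<^sup>2"
    using descent_lemma[OF assms] by simp
  also have "\<dots> = f y - t * (1 - L * t / 2) * (norm (g y))\<^sup>2"
    by (simp add: power2_norm_eq_inner[symmetric] power_mult_distrib algebra_simps power2_eq_square)
  finally show ?thesis .
qed

section \<open>The Lyapunov function of the method\<close>

text \<open>One step of the Lyapunov estimate in isolation: \<open>x1\<close> is the current iterate, \<open>z\<close> a
  minimizer, \<open>G0\<close>, \<open>G1\<close> the previous and current gradients, \<open>Q0\<close>, \<open>Q1\<close> the optimality gaps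
  and \<open>l0\<close>, \<open>l1\<close> the steps.\<close>

lemma energy_step_inequality:
  fixes x1 z G0 G1 :: "'a::real_inner"
  assumes l0: "0 \<le> l0" and l1: "0 \<le> l1" and \<theta>1: "l1 = \<theta>1 * l0"
    and gap1: "Q1 \<le> G1 \<bullet> (x1 - z)"
    and gap_diff: "Q1 - Q0 \<le> - l0 * (G1 \<bullet> G0)"
    and mono: "G1 \<bullet> G0 \<le> (norm G0)\<^sup>2"
    and lip: "l1 * norm (G1 - G0) \<le> \<omega> * l0 * norm G0"
    and \<rho>: "2 * \<rho> * (1 - \<omega>\<^sup>2) = 1" "0 \<le> \<rho>"
  shows "(norm (x1 - l1 *\<^sub>R G1 - z))\<^sup>2 + (2 * \<rho> - 1) * l1\<^sup>2 * (norm G1)\<^sup>2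
           + 2 * l1 * (1 + \<rho> * \<theta>1) * Q1 + 2 * (l0 * (1 + \<rho> * \<theta>0) - \<rho> * l1 * \<theta>1) * Q0
         \<le> (norm (x1 - z))\<^sup>2 + (2 * \<rho> - 1) * l0\<^sup>2 * (norm G0)\<^sup>2 + 2 * l0 * (1 + \<rho> * \<theta>0) * Q0"
proof -
  have "x1 - l1 *\<^sub>R G1 - z = (x1 - z) - l1 *\<^sub>R G1" by simp
  then have expand: "(norm (x1 - l1 *\<^sub>R G1 - z))\<^sup>2
      = (norm (x1 - z))\<^sup>2 - 2 * l1 * (G1 \<bullet> (x1 - z)) + l1\<^sup>2 * (norm G1)\<^sup>2"
    by (simp only: power2_norm_eq_inner)
      (simp add: inner_diff_left inner_diff_right inner_commute power2_eq_square algebra_simps)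
  have diff: "(norm (G1 - G0))\<^sup>2 = (norm G1)\<^sup>2 - 2 * (G1 \<bullet> G0) + (norm G0)\<^sup>2"
    by (simp add: power2_norm_eq_inner inner_diff_left inner_diff_right inner_commute)
  have "l1 * \<theta>1 = \<theta>1\<^sup>2 * l0"
    by (simp add: \<theta>1 power2_eq_square)
  then have \<theta>1_l1: "0 \<le> l1 * \<theta>1"
    using l0 by simp
  have l1_sq: "l1 * \<theta>1 * l0 = l1\<^sup>2"
    by (simp add: \<theta>1 power2_eq_square)
  have gap1': "2 * l1 * Q1 - 2 * l1 * (G1 \<bullet> (x1 - z)) \<le> 0"
    using gap1 l1 by (simp add: mult_left_mono)
  have "2 * \<rho> * (l1 * \<theta>1) * (Q1 - Q0) \<le> 2 * \<rho> * (l1 * \<theta>1) * (- l0 * (G1 \<bullet> G0))"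
    using gap_diff \<theta>1_l1 \<rho>(2) by (intro mult_left_mono) auto
  also have "\<dots> = - 2 * \<rho> * l1\<^sup>2 * (G1 \<bullet> G0)"
    by (simp add: l1_sq[symmetric] algebra_simps)
  finally have gap_diff': "2 * \<rho> * (l1 * \<theta>1) * (Q1 - Q0) \<le> - 2 * \<rho> * l1\<^sup>2 * (G1 \<bullet> G0)" .
  have "2 * \<rho> * l1\<^sup>2 * (norm G1)\<^sup>2 - 2 * \<rho> * l1\<^sup>2 * (G1 \<bullet> G0)
      \<le> 2 * \<rho> * (l1 * norm (G1 - G0))\<^sup>2"
    using diff mono \<rho>(2) by (simp add: power_mult_distrib mult_left_mono flip: right_diff_distrib)
  also have "\<dots> \<le> 2 * \<rho> * (\<omega> * l0 * norm G0)\<^sup>2"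
    using lip l1 \<rho>(2) by (intro mult_left_mono power_mono) auto
  also have "\<dots> = (2 * \<rho> - 1) * l0\<^sup>2 * (norm G0)\<^sup>2"
    using \<rho>(1) by (simp add: power_mult_distrib right_diff_distrib)
  finally have grad_diff:
    "2 * \<rho> * l1\<^sup>2 * (norm G1)\<^sup>2 - 2 * \<rho> * l1\<^sup>2 * (G1 \<bullet> G0) \<le> (2 * \<rho> - 1) * l0\<^sup>2 * (norm G0)\<^sup>2" .
  have "(norm (x1 - l1 *\<^sub>R G1 - z))\<^sup>2 + (2 * \<rho> - 1) * l1\<^sup>2 * (norm G1)\<^sup>2
           + 2 * l1 * (1 + \<rho> * \<theta>1) * Q1 + 2 * (l0 * (1 + \<rho> * \<theta>0) - \<rho> * l1 * \<theta>1) * Q0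
        - ((norm (x1 - z))\<^sup>2 + (2 * \<rho> - 1) * l0\<^sup>2 * (norm G0)\<^sup>2 + 2 * l0 * (1 + \<rho> * \<theta>0) * Q0)
      = (2 * l1 * Q1 - 2 * l1 * (G1 \<bullet> (x1 - z))) + 2 * \<rho> * l1\<^sup>2 * (norm G1)\<^sup>2
        + 2 * \<rho> * (l1 * \<theta>1) * (Q1 - Q0) - (2 * \<rho> - 1) * l0\<^sup>2 * (norm G0)\<^sup>2"
    unfolding expand by (simp add: algebra_simps)
  then show ?thesis
    using gap1' gap_diff' grad_diff by linarith
qed

lemma adasga_alpha_next_scaled:
  assumes "0 < \<gamma>'"
  shows "adasga_alpha_next \<omega> \<tau> a \<gamma> \<theta> \<gamma>' L * \<gamma>' = adasga_alpha_next \<omega> \<tau> (a * \<gamma>) 1 \<theta> 1 L"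
  using assms by (simp add: adasga_alpha_next_def Let_def min_mult_distrib_right)

text \<open>\<open>l k\<close> is the effective step \<open>\<alpha> k * \<gamma> k\<close>; by \<open>adasga_alpha_next_scaled\<close> it obeys the
  step-size rule with all scalings equal to 1. The minimizer \<open>xs\<close> is arbitrary.\<close>

locale adasga =
  fixes f :: "'a::real_inner \<Rightarrow> real" and g :: "'a \<Rightarrow> 'a"
    and x :: "nat \<Rightarrow> 'a" and l \<theta> :: "nat \<Rightarrow> real" and \<omega> \<tau> :: real and xs :: 'a
  assumes convex: "convex_on UNIV f"
    and gradient: "\<And>y. (f has_derivative (\<lambda>h. g y \<bullet> h)) (at y)"
    and minimizer: "\<And>y. f xs \<le> f y"
    and \<omega>_pos: "0 < \<omega>" and \<omega>_le: "\<omega> \<le> 1 / sqrt 2" and \<tau>_ge: "1 \<le> \<tau>"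
    and l_0: "0 < l 0" and \<theta>_0: "0 < \<theta> 0"
    and x_Suc: "\<And>k. x (Suc k) = x k - l k *\<^sub>R g (x k)"
    and l_Suc: "\<And>k. l (Suc k) = adasga_alpha_next \<omega> \<tau> (l k) 1 (\<theta> k) 1 (adasga_L g x k)"
    and \<theta>_Suc: "\<And>k. \<theta> (Suc k) = l (Suc k) / l k"
begin

lemma \<omega>_sq_le: "\<omega>\<^sup>2 \<le> 1 / 2"
proof -
  have "\<omega>\<^sup>2 \<le> (1 / sqrt 2)\<^sup>2" using \<omega>_pos \<omega>_le by (intro power_mono) auto
  then show ?thesis by (simp add: power_divide)
qed

lemma adasga_L_nonneg: "0 \<le> adasga_L g x k"
  by (simp add: adasga_L_def)

lemma l_Suc_cases:
  "l (Suc k) = (if adasga_L g x k = 0 then l k * sqrt (2 * (1 - \<omega>\<^sup>2) + \<theta> k / \<tau>)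
                else min (l k * sqrt (2 * (1 - \<omega>\<^sup>2) + \<theta> k / \<tau>)) (\<omega> / adasga_L g x k))"
  by (simp add: l_Suc adasga_alpha_next_def Let_def)

lemma l_Suc_le: "l (Suc k) \<le> l k * sqrt (2 * (1 - \<omega>\<^sup>2) + \<theta> k / \<tau>)"
  by (simp add: l_Suc_cases)

lemma l_pos_\<theta>_pos: "0 < l k \<and> 0 < \<theta> k"
proof (induction k)
  case 0
  show ?case using l_0 \<theta>_0 by simp
next
  case (Suc k)
  have "1 \<le> 2 * (1 - \<omega>\<^sup>2) + \<theta> k / \<tau>"
    using \<omega>_sq_le Suc \<tau>_ge by (simp add: add_increasing2)
  then have "0 < l (Suc k)"
    using Suc adasga_L_nonneg[of k] \<omega>_pos by (auto simp: l_Suc_cases)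
  then show ?case using Suc by (simp add: \<theta>_Suc)
qed

lemma l_pos: "0 < l k" and \<theta>_pos: "0 < \<theta> k"
  using l_pos_\<theta>_pos by auto

lemma \<theta>_Suc_sq_le: "(\<theta> (Suc k))\<^sup>2 \<le> 2 * (1 - \<omega>\<^sup>2) + \<theta> k"
proof -
  have "\<theta> (Suc k) \<le> sqrt (2 * (1 - \<omega>\<^sup>2) + \<theta> k / \<tau>)"
    using l_Suc_le[of k] l_pos[of k] by (simp add: \<theta>_Suc divide_le_eq mult.commute)
  then have "(\<theta> (Suc k))\<^sup>2 \<le> (sqrt (2 * (1 - \<omega>\<^sup>2) + \<theta> k / \<tau>))\<^sup>2"
    using \<theta>_pos[of "Suc k"] by (intro power_mono) auto
  also have "\<dots> = 2 * (1 - \<omega>\<^sup>2) + \<theta> k / \<tau>"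
    using \<theta>_pos[of k] \<omega>_sq_le \<tau>_ge by simp
  also have "\<dots> \<le> 2 * (1 - \<omega>\<^sup>2) + \<theta> k"
    using \<theta>_pos[of k] \<tau>_ge by (simp add: divide_le_eq)
  finally show ?thesis .
qed

lemma l_Suc_grad_diff_le:
  "l (Suc k) * norm (g (x (Suc k)) - g (x k)) \<le> \<omega> * l k * norm (g (x k))"
proof (cases "adasga_L g x k = 0")
  case True
  then have "g (x (Suc k)) = g (x k)"
    by (auto simp: adasga_L_def x_Suc)
  then show ?thesis using \<omega>_pos l_pos[of k] by simp
next
  case False
  then have "l (Suc k) * norm (g (x (Suc k)) - g (x k))
      \<le> \<omega> / adasga_L g x k * norm (g (x (Suc k)) - g (x k))"
    by (intro mult_right_mono) (auto simp: l_Suc_cases)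
  also have "\<dots> = \<omega> * norm (x (Suc k) - x k)"
    using False by (simp add: adasga_L_def)
  also have "\<dots> = \<omega> * l k * norm (g (x k))"
    using l_pos[of k] by (simp add: x_Suc)
  finally show ?thesis .
qed

lemma l_Suc_ge:
  assumes "adasga_L g x k \<le> L" "0 < L"
  shows "min (l k) (\<omega> / L) \<le> l (Suc k)"
proof -
  have "l k \<le> l k * sqrt (2 * (1 - \<omega>\<^sup>2) + \<theta> k / \<tau>)"
    using l_pos[of k] \<theta>_pos[of k] \<omega>_sq_le \<tau>_ge by (simp add: add_increasing2)
  moreover have "\<omega> / L \<le> \<omega> / adasga_L g x k" if "adasga_L g x k \<noteq> 0"
    using assms that adasga_L_nonneg[of k] \<omega>_pos by (simp add: frac_le)
  ultimately show ?thesis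
    by (auto simp: l_Suc_cases min_le_iff_disj)
qed

lemma g_xs: "g xs = 0"
  using gradient_eq_0_at_minimizer[OF gradient minimizer] .

lemma gradient_inequality: "f u + g u \<bullet> (v - u) \<le> f v"
  using convex_on_gradient_inequality[OF convex gradient] .

definition \<rho> :: real where "\<rho> = 1 / (2 * (1 - \<omega>\<^sup>2))"

lemma \<rho>_eq: "2 * \<rho> * (1 - \<omega>\<^sup>2) = 1"
  and \<rho>_pos: "0 < \<rho>" and \<rho>_ge_half: "1 \<le> 2 * \<rho>" and \<rho>_le_1: "\<rho> \<le> 1"
  using \<omega>_sq_le by (auto simp: \<rho>_def field_simps)

definition energy :: "nat \<Rightarrow> real" where
  "energy n = (norm (x (Suc n) - xs))\<^sup>2 + (2 * \<rho> - 1) * (l n)\<^sup>2 * (norm (g (x n)))\<^sup>2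
              + 2 * l n * (1 + \<rho> * \<theta> n) * (f (x n) - f xs)"

definition weight :: "nat \<Rightarrow> real" where
  "weight n = l n * (1 + \<rho> * \<theta> n) - \<rho> * l (Suc n) * \<theta> (Suc n)"

definition \<eta> :: real where
  "\<eta> = (norm (x 0 - xs))\<^sup>2 + 2 * (l 0)\<^sup>2 * (norm (g (x 0)))\<^sup>2 + 2 * l 0 * \<theta> 0 * (f (x 0) - f xs)"

lemma weight_nonneg: "0 \<le> weight n"
proof -
  have "\<rho> * l (Suc n) * \<theta> (Suc n) = \<rho> * l n * (\<theta> (Suc n))\<^sup>2"
    using l_pos[of n] by (simp add: \<theta>_Suc power2_eq_square)
  also have "\<dots> \<le> \<rho> * l n * (2 * (1 - \<omega>\<^sup>2) + \<theta> n)"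
    using \<theta>_Suc_sq_le[of n] \<rho>_pos l_pos[of n] by (intro mult_left_mono) auto
  also have "\<dots> = l n * (2 * \<rho> * (1 - \<omega>\<^sup>2)) + \<rho> * l n * \<theta> n"
    by (simp add: algebra_simps)
  also have "\<dots> = l n * (1 + \<rho> * \<theta> n)"
    unfolding \<rho>_eq by (simp add: algebra_simps)
  finally show ?thesis by (simp add: weight_def)
qed

lemma sum_weight:
  assumes "a \<le> n"
  shows "(\<Sum>j=a..<n. weight j) = (\<Sum>j=a..<n. l j) + \<rho> * (l a * \<theta> a - l n * \<theta> n)"
proof -
  have "weight j = l j - \<rho> * (l (Suc j) * \<theta> (Suc j) - l j * \<theta> j)" for j
    by (simp add: weight_def algebra_simps)
  then have "(\<Sum>j=a..<n. weight j)
      = (\<Sum>j=a..<n. l j) - \<rho> * (\<Sum>j=a..<n. l (Suc j) * \<theta> (Suc j) - l j * \<theta> j)"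
    by (simp add: sum_subtractf flip: sum_distrib_left)
  also have "(\<Sum>j=a..<n. l (Suc j) * \<theta> (Suc j) - l j * \<theta> j) = l n * \<theta> n - l a * \<theta> a"
    using sum_Suc_diff'[OF assms, of "\<lambda>j. l j * \<theta> j"] .
  finally show ?thesis by (simp add: algebra_simps)
qed

lemma energy_Suc_le: "energy (Suc n) + 2 * weight n * (f (x n) - f xs) \<le> energy n"
proof -
  let ?G0 = "g (x n)" and ?G1 = "g (x (Suc n))"
  have x_diff: "x n - x (Suc n) = l n *\<^sub>R ?G0"
    by (simp add: x_Suc)
  have gap1: "f (x (Suc n)) - f xs \<le> ?G1 \<bullet> (x (Suc n) - xs)"
    using gradient_inequality[of "x (Suc n)" xs] by (simp add: inner_diff_right)
  have gap_diff: "f (x (Suc n)) - f (x n) \<le> - l n * (?G1 \<bullet> ?G0)"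
    using gradient_inequality[of "x (Suc n)" "x n"] by (simp add: x_diff)
  have "l n * ((?G1 - ?G0) \<bullet> ?G0) \<le> 0"
    using gradient_inequality[of "x n" "x (Suc n)"] gap_diff
    by (simp add: x_Suc inner_diff_left algebra_simps)
  then have mono: "?G1 \<bullet> ?G0 \<le> (norm ?G0)\<^sup>2"
    using l_pos[of n] by (simp add: mult_le_0_iff inner_diff_left power2_norm_eq_inner)
  have "l (Suc n) = \<theta> (Suc n) * l n"
    using l_pos[of n] by (simp add: \<theta>_Suc)
  from energy_step_inequality[OF less_imp_le[OF l_pos] less_imp_le[OF l_pos] this gap1 _ mono
      l_Suc_grad_diff_le \<rho>_eq less_imp_le[OF \<rho>_pos], of "f (x n) - f xs" "\<theta> n"] gap_diff
  show ?thesis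
    by (simp add: energy_def weight_def x_Suc[of "Suc n"])
qed

lemma energy_0_le: "energy 0 \<le> \<eta>"
proof -
  have gap0: "f (x 0) - f xs \<le> g (x 0) \<bullet> (x 0 - xs)"
    using gradient_inequality[of "x 0" xs] by (simp add: inner_diff_right)
  have "x 1 - xs = (x 0 - xs) - l 0 *\<^sub>R g (x 0)" by (simp add: x_Suc)
  then have expand: "(norm (x 1 - xs))\<^sup>2
      = (norm (x 0 - xs))\<^sup>2 - 2 * l 0 * (g (x 0) \<bullet> (x 0 - xs)) + (l 0)\<^sup>2 * (norm (g (x 0)))\<^sup>2"
    by (simp only: power2_norm_eq_inner)
      (simp add: inner_diff_left inner_diff_right inner_commute power2_eq_square algebra_simps)
  have "2 * l 0 * (f (x 0) - f xs) \<le> 2 * l 0 * (g (x 0) \<bullet> (x 0 - xs))"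
    using gap0 l_pos[of 0] by (simp add: mult_left_mono)
  moreover have "(2 * \<rho> - 1) * ((l 0)\<^sup>2 * (norm (g (x 0)))\<^sup>2) \<le> 1 * ((l 0)\<^sup>2 * (norm (g (x 0)))\<^sup>2)"
    using \<rho>_le_1 by (intro mult_right_mono) auto
  moreover have "\<rho> * (l 0 * \<theta> 0 * (f (x 0) - f xs)) \<le> l 0 * \<theta> 0 * (f (x 0) - f xs)"
    using \<rho>_pos \<rho>_le_1 l_pos[of 0] \<theta>_pos[of 0] minimizer[of "x 0"]
    by (intro mult_left_le_one_le) auto
  ultimately show ?thesis
    unfolding energy_def \<eta>_def using expand by (simp add: algebra_simps)
qed

lemma energy_le_\<eta>: "energy n \<le> \<eta>"
proof (induction n)
  case 0
  show ?case by (rule energy_0_le)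
next
  case (Suc n)
  have "0 \<le> 2 * weight n * (f (x n) - f xs)"
    using weight_nonneg[of n] minimizer[of "x n"] by simp
  then show ?case using energy_Suc_le[of n] Suc by linarith
qed

lemma energy_telescope:
  assumes "a \<le> n"
  shows "energy n + 2 * (\<Sum>j=a..<n. weight j * (f (x j) - f xs)) \<le> energy a"
  using assms
proof (induction n rule: dec_induct)
  case base
  show ?case by simp
next
  case (step n)
  then show ?case
    using energy_Suc_le[of n] by (simp add: algebra_simps)
qed

lemma energy_gap_sum:
  assumes "a \<le> n" "0 \<le> q" "\<And>j. a \<le> j \<Longrightarrow> j \<le> n \<Longrightarrow> q \<le> f (x j) - f xs"
  shows "(norm (x (Suc n) - xs))\<^sup>2 + 2 * q * (\<Sum>j=a..n. l j) \<le> energy a"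
proof -
  have "q * (\<Sum>j=a..<n. weight j) \<le> (\<Sum>j=a..<n. weight j * (f (x j) - f xs))"
    unfolding sum_distrib_left
    using assms(3) weight_nonneg by (intro sum_mono) (simp add: mult.commute[of q] mult_left_mono)
  moreover have "2 * l n * (1 + \<rho> * \<theta> n) * q \<le> 2 * l n * (1 + \<rho> * \<theta> n) * (f (x n) - f xs)"
    using assms l_pos[of n] \<theta>_pos[of n] \<rho>_pos
    by (intro mult_left_mono) (auto simp: add_nonneg_nonneg)
  moreover have "0 \<le> (2 * \<rho> - 1) * (l n)\<^sup>2 * (norm (g (x n)))\<^sup>2"
    using \<rho>_ge_half by simp
  moreover have "0 \<le> q * (\<rho> * l a * \<theta> a)"
    using assms(2) \<rho>_pos l_pos[of a] \<theta>_pos[of a] by simp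
  moreover have "(\<Sum>j=a..n. l j) = (\<Sum>j=a..<n. l j) + l n"
    using assms(1) by (simp add: sum.atLeastLessThan_Suc flip: atLeastLessThanSuc_atLeastAtMost)
  ultimately show ?thesis
    using energy_telescope[OF assms(1)] sum_weight[OF assms(1)]
    unfolding energy_def by (simp add: algebra_simps)
qed

lemma dist_xs_le_\<eta>: "(norm (x k - xs))\<^sup>2 \<le> \<eta>"
proof (cases k)
  case 0
  then show ?thesis
    using l_pos[of 0] \<theta>_pos[of 0] minimizer[of "x 0"] by (simp add: \<eta>_def)
next
  case (Suc n)
  then show ?thesis
    using energy_gap_sum[of n n 0] energy_le_\<eta>[of n] minimizer by simp
qed

lemma \<eta>_nonneg: "0 \<le> \<eta>"
  using dist_xs_le_\<eta>[of 0] by (metis order_trans zero_le_power2)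

lemma iterates_in_cball:
  assumes "sqrt \<eta> + norm (x 0 - xs) + norm (x 0) \<le> R"
  shows "x k \<in> cball 0 R" and "xs \<in> cball 0 R"
proof -
  have "norm (x k - xs) \<le> sqrt \<eta>"
    using dist_xs_le_\<eta>[of k] by (simp add: real_le_rsqrt)
  moreover have "norm xs \<le> norm (x 0 - xs) + norm (x 0)"
    using norm_triangle_ineq4[of "x 0" "x 0 - xs"] by simp
  moreover have "norm (x k) \<le> norm (x k - xs) + norm xs"
    using norm_triangle_sub[of "x k" xs] by simp
  moreover have "0 \<le> sqrt \<eta>"
    using \<eta>_nonneg by simp
  ultimately have "norm (x k) \<le> R" "norm xs \<le> R"
    using assms by linarith+
  then show "x k \<in> cball 0 R" "xs \<in> cball 0 R"
    by simp_all
qed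

end

section \<open>Rates on a region where the gradient is Lipschitz\<close>

lemma first_index_le_ceiling:
  fixes h :: "nat \<Rightarrow> real"
  assumes rate: "\<And>N. 1 \<le> N \<Longrightarrow> \<exists>k\<le>N. h k \<le> C / real N" and C: "0 \<le> C" and \<epsilon>: "0 < \<epsilon>"
  shows "(\<exists>k. h k \<le> \<epsilon>) \<and> int (LEAST k. h k \<le> \<epsilon>) \<le> \<lceil>1 + C / \<epsilon>\<rceil>"
proof -
  define N where "N = max 1 (nat \<lceil>C / \<epsilon>\<rceil>)"
  have ceiling: "\<lceil>1 + C / \<epsilon>\<rceil> = \<lceil>C / \<epsilon>\<rceil> + 1"
    by (metis add.commute ceiling_add_one)
  have "0 \<le> C / \<epsilon>"
    using C \<epsilon> by simp
  then have "0 \<le> \<lceil>C / \<epsilon>\<rceil>"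
    by (metis ceiling_mono ceiling_zero)
  then have N: "1 \<le> N" "int N \<le> \<lceil>1 + C / \<epsilon>\<rceil>"
    unfolding N_def ceiling by linarith+
  have "C / \<epsilon> \<le> real N"
    unfolding N_def by linarith
  then have "C / real N \<le> \<epsilon>"
    using \<epsilon> N(1) by (simp add: field_simps)
  then obtain k where "k \<le> N" "h k \<le> \<epsilon>"
    using rate[OF N(1)] by force
  moreover from this have "(LEAST k. h k \<le> \<epsilon>) \<le> k"
    by (intro Least_le)
  ultimately show ?thesis
    using N(2) by auto
qed

locale adasga_lipschitz = adasga +
  fixes W :: "'a set" and LW :: real
  assumes convex_W: "convex W" and x_in_W: "\<And>k. x k \<in> W" and xs_in_W: "xs \<in> W"
    and lipschitz: "LW-lipschitz_on W g" and LW_pos: "0 < LW"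
begin

definition m :: real where "m = min (LW * l 0) \<omega>"

lemma m_pos: "0 < m"
  using LW_pos l_pos[of 0] \<omega>_pos by (simp add: m_def)

lemma adasga_L_le: "adasga_L g x k \<le> LW"
  using lipschitz_on_normD[OF lipschitz x_in_W x_in_W, of "Suc k" k] LW_pos
  by (cases "x (Suc k) = x k") (auto simp: adasga_L_def divide_le_eq)

lemma l_ge: "m / LW \<le> l k"
proof (induction k)
  case 0
  show ?case using LW_pos by (simp add: m_def divide_le_eq mult.commute)
next
  case (Suc k)
  have "m / LW \<le> \<omega> / LW"
    using LW_pos by (simp add: m_def divide_right_mono)
  with Suc have "m / LW \<le> min (l k) (\<omega> / LW)" by simp
  also have "\<dots> \<le> l (Suc k)"
    using l_Suc_ge[OF adasga_L_le LW_pos] .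
  finally show ?case .
qed

lemma gap_le_dist: "f (x k) - f xs \<le> LW / 2 * (norm (x k - xs))\<^sup>2"
  using descent_lemma[OF gradient convex_W lipschitz xs_in_W x_in_W, of k] by (simp add: g_xs)

lemma gap_Suc_le_small_step:
  assumes "l k \<le> 1 / LW"
  shows "f (x (Suc k)) - f xs + m / (2 * LW) * (norm (g (x k)))\<^sup>2 \<le> f (x k) - f xs"
proof -
  have "m / (2 * LW) \<le> l k * (1 - LW * l k / 2)"
  proof -
    have "LW * l k \<le> 1" using assms LW_pos by (simp add: le_divide_eq mult.commute)
    then have "l k * (1 / 2) \<le> l k * (1 - LW * l k / 2)"
      using l_pos[of k] by (intro mult_left_mono) auto
    moreover have "m / (2 * LW) \<le> l k / 2"
      using l_ge[of k] by simp
    ultimately show ?thesis by simp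
  qed
  then have "m / (2 * LW) * (norm (g (x k)))\<^sup>2 \<le> l k * (1 - LW * l k / 2) * (norm (g (x k)))\<^sup>2"
    by (intro mult_right_mono) auto
  moreover have "f (x (Suc k)) \<le> f (x k) - l k * (1 - LW * l k / 2) * (norm (g (x k)))\<^sup>2"
    using gradient_step_decrease[OF gradient convex_W lipschitz x_in_W, of k "l k"] x_in_W[of "Suc k"]
    by (simp add: x_Suc)
  ultimately show ?thesis by linarith
qed

lemma grad_sq_le_gap_large_step:
  assumes "1 / LW \<le> l k"
  shows "(norm (g (x k)))\<^sup>2 \<le> 2 * LW * (f (x k) - f xs)"
proof -
  define t where "t = 1 / (LW * l k)"
  have t: "0 \<le> t" "t \<le> 1"
    using assms LW_pos l_pos[of k] by (auto simp: t_def field_simps)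
  have "x k - (1 / LW) *\<^sub>R g (x k) = (1 - t) *\<^sub>R x k + t *\<^sub>R x (Suc k)"
    using LW_pos l_pos[of k] by (simp add: x_Suc t_def algebra_simps)
  then have "x k - (1 / LW) *\<^sub>R g (x k) \<in> W"
    using convex_W x_in_W t by (simp add: convex_def)
  from gradient_step_decrease[OF gradient convex_W lipschitz x_in_W this]
  have "f (x k - (1 / LW) *\<^sub>R g (x k)) \<le> f (x k) - (norm (g (x k)))\<^sup>2 / (2 * LW)"
    using LW_pos by simp
  moreover have "f xs \<le> f (x k - (1 / LW) *\<^sub>R g (x k))" by (rule minimizer)
  ultimately have "(norm (g (x k)))\<^sup>2 / (2 * LW) \<le> f (x k) - f xs"
    by linarith
  then show ?thesis
    using LW_pos by (simp add: divide_le_eq mult.commute)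
qed

lemma sum_l_ge: "real (card A) * (m / LW) \<le> (\<Sum>j\<in>A. l j)"
  using sum_bounded_below[of A "m / LW" l] l_ge by simp

lemma gap_rate:
  assumes "LW * \<eta> \<le> C" "1 \<le> N"
  shows "\<exists>k\<le>N. f (x k) - f xs \<le> C / (2 * real N * m)"
proof -
  define q where "q = Min ((\<lambda>j. f (x j) - f xs) ` {0..N})"
  have "q \<in> (\<lambda>j. f (x j) - f xs) ` {0..N}"
    unfolding q_def by (intro Min_in) auto
  then obtain k where k: "k \<le> N" "q = f (x k) - f xs"
    by auto
  have q_le: "q \<le> f (x j) - f xs" if "j \<le> N" for j
    using that by (simp add: q_def)
  have "0 \<le> q"
    using k minimizer by simp
  then have "(norm (x (Suc N) - xs))\<^sup>2 + 2 * q * (\<Sum>j=0..N. l j) \<le> energy 0"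
    using q_le by (intro energy_gap_sum) auto
  then have energy_bound: "2 * q * (\<Sum>j=0..N. l j) \<le> \<eta>"
    using energy_le_\<eta>[of 0] zero_le_power2[of "norm (x (Suc N) - xs)"] by linarith
  have "real N * (m / LW) \<le> real (card {0..N}) * (m / LW)"
    using m_pos LW_pos by (intro mult_right_mono) auto
  then have "real N * (m / LW) \<le> (\<Sum>j=0..N. l j)"
    using sum_l_ge[of "{0..N}"] by linarith
  then have "2 * q * (real N * (m / LW)) \<le> 2 * q * (\<Sum>j=0..N. l j)"
    using \<open>0 \<le> q\<close> by (intro mult_left_mono) auto
  also have "\<dots> \<le> \<eta>"
    by (fact energy_bound)
  also have "\<dots> \<le> C / LW"
    using assms(1) LW_pos by (simp add: field_simps)
  finally have "q \<le> C / (2 * real N * m)"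
    using assms(2) m_pos LW_pos by (simp add: field_simps)
  then show ?thesis
    using k by auto
qed

lemma gap_ge_before_large_step:
  assumes large: "1 / LW \<le> l B" and "j \<le> B"
    and M: "\<And>i. j \<le> i \<Longrightarrow> i \<le> B \<Longrightarrow> M \<le> (norm (g (x i)))\<^sup>2"
  shows "M / (2 * LW) \<le> f (x j) - f xs"
  using \<open>j \<le> B\<close>
proof (induction rule: inc_induct)
  case base
  show ?case
    using grad_sq_le_gap_large_step[OF large] M[of B] \<open>j \<le> B\<close> LW_pos
    by (simp add: divide_le_eq mult.commute)
next
  case (step n)
  show ?case
  proof (cases "1 / LW \<le> l n")
    case True
    then show ?thesis
      using grad_sq_le_gap_large_step[of n] M[of n] step.hyps LW_pos
      by (simp add: divide_le_eq mult.commute)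
  next
    case False
    have "0 \<le> m / (2 * LW) * (norm (g (x n)))\<^sup>2"
      using m_pos LW_pos by simp
    then show ?thesis
      using gap_Suc_le_small_step[of n] False step.IH by simp
  qed
qed

lemma gap_ge_small_steps:
  assumes "j \<le> Suc N"
    and small: "\<And>i. j \<le> i \<Longrightarrow> i \<le> N \<Longrightarrow> l i \<le> 1 / LW \<and> M \<le> (norm (g (x i)))\<^sup>2"
  shows "real (Suc N - j) * (m / (2 * LW) * M) \<le> f (x j) - f xs"
  using assms(1)
proof (induction rule: inc_induct)
  case base
  show ?case using minimizer by simp
next
  case (step n)
  have "m / (2 * LW) * M \<le> m / (2 * LW) * (norm (g (x n)))\<^sup>2"
    using small[of n] step.hyps m_pos LW_pos by (intro mult_left_mono) auto
  moreover have "real (Suc N - n) * (m / (2 * LW) * M)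
      = real (Suc N - Suc n) * (m / (2 * LW) * M) + m / (2 * LW) * M"
    using step.hyps LW_pos by (simp add: Suc_diff_Suc field_simps)
  moreover have "f (x (Suc n)) - f xs + m / (2 * LW) * (norm (g (x n)))\<^sup>2 \<le> f (x n) - f xs"
    using gap_Suc_le_small_step small[of n] step.hyps by simp
  ultimately show ?case
    using step.IH by linarith
qed

lemma dist_Suc_after_small_steps:
  assumes "B \<le> N"
    and small: "\<And>i. B < i \<Longrightarrow> i \<le> N \<Longrightarrow> l i \<le> 1 / LW \<and> M \<le> (norm (g (x i)))\<^sup>2"
  shows "real (N - B) * m * M / LW\<^sup>2 \<le> (norm (x (Suc B) - xs))\<^sup>2"
proof -
  have "real (Suc N - Suc B) * (m / (2 * LW) * M) \<le> f (x (Suc B)) - f xs"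
    using assms by (intro gap_ge_small_steps) auto
  also have "\<dots> \<le> LW / 2 * (norm (x (Suc B) - xs))\<^sup>2"
    by (rule gap_le_dist)
  finally show ?thesis
    using LW_pos by (simp add: field_simps power2_eq_square)
qed

lemma dist_Suc_large_step_le:
  assumes "1 \<le> B" "1 / LW \<le> l B" "0 \<le> M"
    and M: "\<And>k. 1 \<le> k \<Longrightarrow> k \<le> B \<Longrightarrow> M \<le> (norm (g (x k)))\<^sup>2"
  shows "(norm (x (Suc B) - xs))\<^sup>2 + real B * m * M / LW\<^sup>2 \<le> \<eta>"
proof -
  have "M / (2 * LW) \<le> f (x j) - f xs" if "1 \<le> j" "j \<le> B" for j
    using that assms(2) M by (intro gap_ge_before_large_step) auto
  then have "(norm (x (Suc B) - xs))\<^sup>2 + 2 * (M / (2 * LW)) * (\<Sum>j=1..B. l j) \<le> energy 1"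
    using assms(1,3) LW_pos by (intro energy_gap_sum) auto
  moreover have "real B * m * M / LW\<^sup>2 = 2 * (M / (2 * LW)) * (real B * (m / LW))"
    using LW_pos by (simp add: field_simps power2_eq_square)
  moreover have "2 * (M / (2 * LW)) * (real B * (m / LW)) \<le> 2 * (M / (2 * LW)) * (\<Sum>j=1..B. l j)"
    using sum_l_ge[of "{1..B}"] assms(3) LW_pos by (intro mult_left_mono) auto
  ultimately show ?thesis
    using energy_le_\<eta>[of 1] by linarith
qed

text \<open>Split the first \<open>N\<close> iterations at the last long step \<open>B\<close> (one with \<open>1 / LW \<le> l B\<close>).
  Up to \<open>B\<close> the gap stays above \<open>M / (2 LW)\<close>, which the Lyapunov estimate charges against
  \<open>\<eta>\<close>; after \<open>B\<close> every step decreases the gap by at least \<open>m M / (2 LW)\<close>, so the gap at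
  \<open>B + 1\<close>, and with it the distance to \<open>xs\<close>, must be large.\<close>

lemma grad_sq_min_bound:
  assumes "1 \<le> N" "0 \<le> M" and M: "\<And>k. 1 \<le> k \<Longrightarrow> k \<le> N \<Longrightarrow> M \<le> (norm (g (x k)))\<^sup>2"
  shows "real N * m * M \<le> LW\<^sup>2 * \<eta>"
proof -
  define B where "B = Max (insert 0 {j \<in> {1..N}. 1 / LW \<le> l j})"
  have B_mem: "B \<in> insert 0 {j \<in> {1..N}. 1 / LW \<le> l j}"
    unfolding B_def by (intro Max_in) auto
  then have "B \<le> N" by auto
  have after_B: "l i \<le> 1 / LW" if "B < i" "i \<le> N" for i
  proof (rule ccontr)
    assume "\<not> l i \<le> 1 / LW"
    with that have "i \<le> B"
      unfolding B_def by (intro Max_ge) auto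
    with that show False by simp
  qed
  have tail: "real (N - B) * m * M / LW\<^sup>2 \<le> (norm (x (Suc B) - xs))\<^sup>2"
    using \<open>B \<le> N\<close> M after_B by (intro dist_Suc_after_small_steps) auto
  have head: "(norm (x (Suc B) - xs))\<^sup>2 + real B * m * M / LW\<^sup>2 \<le> \<eta>"
  proof (cases "B = 0")
    case True
    then show ?thesis using dist_xs_le_\<eta> by simp
  next
    case False
    with B_mem \<open>B \<le> N\<close> M \<open>0 \<le> M\<close> show ?thesis
      by (intro dist_Suc_large_step_le) auto
  qed
  have "real N * m * M / LW\<^sup>2 = real (N - B) * m * M / LW\<^sup>2 + real B * m * M / LW\<^sup>2"
    using \<open>B \<le> N\<close> LW_pos by (simp add: of_nat_diff field_simps)
  then have "real N * m * M / LW\<^sup>2 \<le> \<eta>"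
    using head tail by linarith
  then show ?thesis
    using LW_pos by (simp add: divide_le_eq mult.commute)
qed

lemma grad_rate:
  assumes "1 \<le> N"
  shows "\<exists>k\<in>{1..N}. (norm (g (x k)))\<^sup>2 \<le> LW\<^sup>2 * \<eta> / (real N * m)"
proof -
  define M where "M = Min ((\<lambda>k. (norm (g (x k)))\<^sup>2) ` {1..N})"
  have "M \<in> (\<lambda>k. (norm (g (x k)))\<^sup>2) ` {1..N}"
    unfolding M_def using assms by (intro Min_in) auto
  then obtain k where k: "k \<in> {1..N}" "M = (norm (g (x k)))\<^sup>2"
    by auto
  have "M \<le> (norm (g (x j)))\<^sup>2" if "1 \<le> j" "j \<le> N" for j
    unfolding M_def using that by (intro Min_le) auto
  then have "real N * m * M \<le> LW\<^sup>2 * \<eta>"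
    using assms k by (intro grad_sq_min_bound) auto
  then have "M \<le> LW\<^sup>2 * \<eta> / (real N * m)"
    using assms m_pos by (simp add: field_simps)
  with k show ?thesis by auto
qed

lemma min_grad_norm_le:
  assumes "1 \<le> N"
  shows "Min ((\<lambda>k. norm (g (x k))) ` {1..N}) \<le> sqrt (LW\<^sup>2 * \<eta> / (real N * m))"
proof -
  obtain k where k: "k \<in> {1..N}" "(norm (g (x k)))\<^sup>2 \<le> LW\<^sup>2 * \<eta> / (real N * m)"
    using grad_rate[OF assms] by blast
  then have "Min ((\<lambda>k. norm (g (x k))) ` {1..N}) \<le> norm (g (x k))"
    by (intro Min_le) auto
  also have "\<dots> \<le> sqrt (LW\<^sup>2 * \<eta> / (real N * m))"
    using k by (intro real_le_rsqrt)
  finally show ?thesis .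
qed

lemma grad_norm_complexity:
  assumes "0 < \<epsilon>"
  shows "(\<exists>k. norm (g (x k)) \<le> \<epsilon>) \<and> int (LEAST k. norm (g (x k)) \<le> \<epsilon>) \<le> \<lceil>1 + LW\<^sup>2 * \<eta> / (\<epsilon>\<^sup>2 * m)\<rceil>"
proof -
  have sq: "norm (g (x k)) \<le> \<epsilon> \<longleftrightarrow> (norm (g (x k)))\<^sup>2 \<le> \<epsilon>\<^sup>2" for k
    using assms by (simp add: power2_le_iff_abs_le)
  have "\<exists>k\<le>N. (norm (g (x k)))\<^sup>2 \<le> (LW\<^sup>2 * \<eta> / m) / real N" if "1 \<le> N" for N
    using grad_rate[OF that] by (force simp: divide_divide_eq_left mult.commute)
  then have "(\<exists>k. (norm (g (x k)))\<^sup>2 \<le> \<epsilon>\<^sup>2)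
      \<and> int (LEAST k. (norm (g (x k)))\<^sup>2 \<le> \<epsilon>\<^sup>2) \<le> \<lceil>1 + (LW\<^sup>2 * \<eta> / m) / \<epsilon>\<^sup>2\<rceil>"
    using \<eta>_nonneg m_pos assms by (intro first_index_le_ceiling) auto
  then show ?thesis
    by (simp add: sq divide_divide_eq_left mult.commute)
qed

lemma min_gap_le:
  assumes "LW * \<eta> \<le> C" "1 \<le> N"
  shows "Min ((\<lambda>k. f (x k)) ` {0..N}) - f xs \<le> C / (2 * real N * m)"
proof -
  obtain k where k: "k \<le> N" "f (x k) - f xs \<le> C / (2 * real N * m)"
    using gap_rate[OF assms] by blast
  then have "Min ((\<lambda>k. f (x k)) ` {0..N}) \<le> f (x k)"
    by (intro Min_le) auto
  with k show ?thesis
    by linarith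
qed

lemma gap_complexity:
  assumes "LW * \<eta> \<le> C" "0 < \<epsilon>"
  shows "(\<exists>k. f (x k) - f xs \<le> \<epsilon>) \<and> int (LEAST k. f (x k) - f xs \<le> \<epsilon>) \<le> \<lceil>1 + C / (2 * \<epsilon> * m)\<rceil>"
proof -
  have "0 \<le> C"
    using assms(1) LW_pos \<eta>_nonneg by (metis order_trans mult_nonneg_nonneg less_imp_le)
  have "\<exists>k\<le>N. f (x k) - f xs \<le> (C / (2 * m)) / real N" if "1 \<le> N" for N
    using gap_rate[OF assms(1) that] by (simp add: divide_divide_eq_left mult_ac)
  then have "(\<exists>k. f (x k) - f xs \<le> \<epsilon>)
      \<and> int (LEAST k. f (x k) - f xs \<le> \<epsilon>) \<le> \<lceil>1 + (C / (2 * m)) / \<epsilon>\<rceil>"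
    using \<open>0 \<le> C\<close> m_pos assms(2) by (intro first_index_le_ceiling) auto
  then show ?thesis
    by (simp add: divide_divide_eq_left mult_ac)
qed

end

lemma (in adasga) adasga_lipschitz_cball:
  assumes R: "sqrt \<eta> + norm (x 0 - xs) + norm (x 0) \<le> R"
    and LW: "0 < LW" "\<forall>y\<in>cball 0 R. \<forall>z\<in>cball 0 R. norm (g y - g z) \<le> LW * norm (y - z)"
  shows "adasga_lipschitz f g x l \<theta> \<omega> \<tau> xs (cball 0 R) LW"
proof (intro adasga_lipschitz.intro adasga_lipschitz_axioms.intro)
  show "LW-lipschitz_on (cball 0 R) g"
    using LW by (intro lipschitz_onI) (auto simp: dist_norm)
qed (use adasga_axioms iterates_in_cball[OF R] LW in auto)

theorem theorem4p4:
  fixes f :: "'a::euclidean_space \<Rightarrow> real" and g :: "'a \<Rightarrow> 'a"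
    and x :: "nat \<Rightarrow> 'a" and \<alpha> \<theta> \<gamma> :: "nat \<Rightarrow> real"
    and \<tau> \<omega> \<gamma>min \<gamma>max R LW :: real
  assumes cvx: "convex_on UNIV f"
    and grad: "\<And>y. (f has_derivative (\<lambda>h. g y \<bullet> h)) (at y)"
    and gcont: "continuous_on UNIV g"
    and gloclip: "locally_lipschitz g"
    and argmin_ne: "{z. \<forall>y. f z \<le> f y} \<noteq> {}"
    and \<alpha>0: "\<alpha> 0 > 0" and \<theta>0: "\<theta> 0 > 0"
    and \<tau>: "\<tau> \<ge> 1" and \<omega>: "0 < \<omega>" "\<omega> \<le> 1 / sqrt 2"
    and \<gamma>range: "0 < \<gamma>min" "\<gamma>min \<le> \<gamma>max" "\<And>k. \<gamma> k \<in> {\<gamma>min..\<gamma>max}"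
    and xrec: "\<And>k. x (Suc k) = x k - (\<alpha> k * \<gamma> k) *\<^sub>R g (x k)"
    and \<alpha>rec: "\<And>k. \<alpha> (Suc k) =
          adasga_alpha_next \<omega> \<tau> (\<alpha> k) (\<gamma> k) (\<theta> k) (\<gamma> (Suc k)) (adasga_L g x k)"
    and \<theta>rec: "\<And>k. \<theta> (Suc k) = \<alpha> (Suc k) * \<gamma> (Suc k) / (\<alpha> k * \<gamma> k)"
    and R: "R > sqrt ((infdist (x 0) {z. \<forall>y. f z \<le> f y})\<^sup>2
                 + 2 * (\<alpha> 0)\<^sup>2 * (\<gamma> 0)\<^sup>2 * (norm (g (x 0)))\<^sup>2
                 + 2 * \<alpha> 0 * \<gamma> 0 * \<theta> 0 * (f (x 0) - (INF y. f y)))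
             + infdist (x 0) {z. \<forall>y. f z \<le> f y} + norm (x 0)"
    and LW: "LW > 0"
    and LWlip: "\<forall>y\<in>cball 0 R. \<forall>z\<in>cball 0 R. norm (g y - g z) \<le> LW * norm (y - z)"
  shows "let fstar = (INF y. f y);
             \<eta> = (infdist (x 0) {z. \<forall>y. f z \<le> f y})\<^sup>2
                 + 2 * (\<alpha> 0)\<^sup>2 * (\<gamma> 0)\<^sup>2 * (norm (g (x 0)))\<^sup>2
                 + 2 * \<alpha> 0 * \<gamma> 0 * \<theta> 0 * (f (x 0) - fstar);
             m = min (LW * \<alpha> 0 * \<gamma> 0) \<omega>
         in (\<forall>N::nat. N \<ge> 1 \<longrightarrow>
               Min ((\<lambda>k. norm (g (x k))) ` {1..N}) \<le> sqrt (LW\<^sup>2 * \<eta> / (real N * m)))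
          \<and> (\<forall>\<epsilon>>0. (\<exists>k. norm (g (x k)) \<le> \<epsilon>) \<and>
               int (LEAST k. norm (g (x k)) \<le> \<epsilon>) \<le> \<lceil>1 + LW\<^sup>2 * \<eta> / (\<epsilon>\<^sup>2 * m)\<rceil>)
          \<and> (\<forall>N::nat. N \<ge> 1 \<longrightarrow>
               Min ((\<lambda>k. f (x k)) ` {0..N}) - fstar
                 \<le> LW * ((R + norm (x 0))\<^sup>2 + \<eta>) / (2 * real N * m))
          \<and> (\<forall>\<epsilon>>0. (\<exists>k. f (x k) - fstar \<le> \<epsilon>) \<and>
               int (LEAST k. f (x k) - fstar \<le> \<epsilon>)
                 \<le> \<lceil>1 + LW * ((R + norm (x 0))\<^sup>2 + \<eta>) / (2 * \<epsilon> * m)\<rceil>)"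
proof -
  have "continuous_on UNIV f"
    using grad has_derivative_continuous continuous_at_imp_continuous_on by blast
  then obtain xs where xs: "\<And>y. f xs \<le> f y" "infdist (x 0) {z. \<forall>y. f z \<le> f y} = dist (x 0) xs"
    using nearest_minimizer argmin_ne by blast
  define l where "l k = \<alpha> k * \<gamma> k" for k
  have \<gamma>_pos: "0 < \<gamma> k" for k
    using \<gamma>range by (meson atLeastAtMost_iff less_le_trans)
  interpret adasga f g x l \<theta> \<omega> \<tau> xs
    using cvx grad xs(1) \<omega> \<tau> \<alpha>0 \<theta>0 \<gamma>_pos xrec \<theta>rec
    by unfold_locales (auto simp: l_def \<alpha>rec adasga_alpha_next_scaled)
  have fstar: "(INF y. f y) = f xs"
    using minimizer by (intro cInf_eq_minimum) auto
  have \<eta>_eq: "(infdist (x 0) {z. \<forall>y. f z \<le> f y})\<^sup>2 + 2 * (\<alpha> 0)\<^sup>2 * (\<gamma> 0)\<^sup>2 * (norm (g (x 0)))\<^sup>2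
      + 2 * \<alpha> 0 * \<gamma> 0 * \<theta> 0 * (f (x 0) - f xs) = \<eta>"
    using xs(2) by (simp add: \<eta>_def l_def dist_norm power_mult_distrib)
  interpret adasga_lipschitz f g x l \<theta> \<omega> \<tau> xs "cball 0 R" LW
    using R LW LWlip xs(2) unfolding fstar \<eta>_eq
    by (intro adasga_lipschitz_cball) (auto simp: dist_norm)
  have m_eq: "min (LW * \<alpha> 0 * \<gamma> 0) \<omega> = m"
    by (simp add: m_def l_def mult.assoc)
  have "LW * \<eta> \<le> LW * ((R + norm (x 0))\<^sup>2 + \<eta>)"
    using LW by simp
  then show ?thesis
    unfolding Let_def fstar \<eta>_eq m_eq
    using min_grad_norm_le grad_norm_complexity min_gap_le gap_complexity by blast
qed

end
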